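(* Let $G=(V,E)$ be a transport graph with $n$ nodes and $m$ edges, let $A\in\mathbb{R}^{m\times n}$ be its incidence matrix, let $g\in\mathbb{R}^n$ be a vector of positive node weights, and let $c\in\mathbb{R}^m$ be the vector whose entries are all $0$ except the entry corresponding to the source/sink edge, which equals $1$. Consider the combinatorial continuous maximum flow (CCMF) problem $$\max_{F\in\mathbb{R}^m} c^TF \quad\text{s.t.}\quad A^TF=0,\qquad |A^T|F^2\le g^2 .$$ Its Lagrangian dual problem, with multipliers $\lambda\in\mathbb{R}^n$ (for the inequality constraints) and $\nu\in\mathbb{R}^n$ (for the equality constraints), is $$\min_{\lambda\in\mathbb{R}^n,\ \nu\in\mathbb{R}^n}\ \lambda^Tg^2+\frac14\Big(\mathbf{1}^m\cdot/(|A|\lambda)\Big)^T\Big((c+A\nu)^2\Big)\quad\text{s.t.}\quad \lambda\ge 0,$$ equivalently, in summation form, $$\min_{\lambda,\nu}\ \sum_{v_i\in V}\lambda_i g_i^2+\frac14\sum_{e_{ij}\in E\setminus\{e_{st}\}}\frac{(\nu_i-\nu_j)^2}{\lambda_i+\lambda_j}+\frac14\frac{(\nu_s-\nu_t-1)^2}{\lambda_s+\lambda_t}\quad\text{s.t. }\lambda_i\ge0\ \forall i\in V.$$ Moreover, an optimal solution $(F^*,\lambda^*,\nu^* )$ satisfies $$\max_F c^TF=c^TF^*=2{\lambda^*}^Tg^2,$$ and the $n$ equalities $$\lambda^*\cdot|A^T|\Big((c+A\nu^* )\cdot/(|A|\lambda^* )\Big)^2=4\,\lambda^*\cdot g^2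 .$$
   Context: A transport graph $G=(V,E)$ is a graph containing two distinguished nodes, a source $s$ and a sink $t$, with additional edges linking some nodes to the source and some to the sink, and an edge $e_{st}$ joining source and sink (the "source/sink edge"); $n=|V|$ and $m=|E|$ count all nodes and edges including these. Each edge $e_{ij}$ is oriented from $v_i$ to $v_j$, and a flow is a vector $F\in\mathbb{R}^m$ with $F_{ij}$ the flow on $e_{ij}$ (positive meaning from $v_i$ to $v_j$). The incidence matrix $A\in\mathbb{R}^{m\times n}$ has $A_{e_{ij},v_k}=+1$ if $k=i$, $-1$ if $k=j$, and $0$ otherwise; $|A|$ denotes the matrix of entrywise absolute values. For vectors, $v^2=v\cdot v$ is the entrywise (Hadamard) square, "$\cdot$" is the entrywise product, $u\cdot/v=[u_1/v_1,\dots,u_k/v_k]$ is entrywise division, $\mathbf{1}^k$ is the all-ones vector of length $k$, and inequalities between vectors are entrywise. *)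

theory Defs
  imports Complex_Main "HOL-Library.Extended_Real"
begin

definition transport_graph ::
  "('e::finite \<Rightarrow> 'v::finite) \<Rightarrow> ('e \<Rightarrow> 'v) \<Rightarrow> 'v \<Rightarrow> 'v \<Rightarrow> 'e \<Rightarrow> bool" where
  "transport_graph src dst s t est \<longleftrightarrow>
     (\<forall>e. src e \<noteq> dst e) \<and> s \<noteq> t \<and> {src est, dst est} = {s, t}"

definition inc :: "('e \<Rightarrow> 'v) \<Rightarrow> ('e \<Rightarrow> 'v) \<Rightarrow> 'e \<Rightarrow> 'v \<Rightarrow> real" where
  "inc src dst e k = (if k = src e then 1 else if k = dst e then -1 else 0)"

definition cvec :: "'e \<Rightarrow> 'e \<Rightarrow> real" where
  "cvec est e = (if e = est then 1 else 0)"

definition primal_obj :: "'e::finite \<Rightarrow> ('e \<Rightarrow> real) \<Rightarrow> real" where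
  "primal_obj est F = (\<Sum>e\<in>UNIV. cvec est e * F e)"

definition primal_feasible ::
  "('e::finite \<Rightarrow> 'v) \<Rightarrow> ('e \<Rightarrow> 'v) \<Rightarrow> ('v \<Rightarrow> real) \<Rightarrow> ('e \<Rightarrow> real) \<Rightarrow> bool" where
  "primal_feasible src dst g F \<longleftrightarrow>
     (\<forall>k. (\<Sum>e\<in>UNIV. inc src dst e k * F e) = 0) \<and>
     (\<forall>k. (\<Sum>e\<in>UNIV. \<bar>inc src dst e k\<bar> * (F e)\<^sup>2) \<le> (g k)\<^sup>2)"

definition primal_optimal ::
  "('e::finite \<Rightarrow> 'v) \<Rightarrow> ('e \<Rightarrow> 'v) \<Rightarrow> 'e \<Rightarrow> ('v \<Rightarrow> real) \<Rightarrow> ('e \<Rightarrow> real) \<Rightarrow> bool" where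
  "primal_optimal src dst est g F \<longleftrightarrow> primal_feasible src dst g F \<and>
     (\<forall>F'. primal_feasible src dst g F' \<longrightarrow> primal_obj est F' \<le> primal_obj est F)"

definition lagrangian ::
  "('e::finite \<Rightarrow> 'v::finite) \<Rightarrow> ('e \<Rightarrow> 'v) \<Rightarrow> 'e \<Rightarrow> ('v \<Rightarrow> real) \<Rightarrow>
   ('e \<Rightarrow> real) \<Rightarrow> ('v \<Rightarrow> real) \<Rightarrow> ('v \<Rightarrow> real) \<Rightarrow> real" where
  "lagrangian src dst est g F lam nu =
     primal_obj est F
     + (\<Sum>k\<in>UNIV. nu k * (\<Sum>e\<in>UNIV. inc src dst e k * F e))
     + (\<Sum>k\<in>UNIV. lam k * ((g k)\<^sup>2 - (\<Sum>e\<in>UNIV. \<bar>inc src dst e k\<bar> * (F e)\<^sup>2)))"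

definition dual_fun ::
  "('e::finite \<Rightarrow> 'v::finite) \<Rightarrow> ('e \<Rightarrow> 'v) \<Rightarrow> 'e \<Rightarrow> ('v \<Rightarrow> real) \<Rightarrow>
   ('v \<Rightarrow> real) \<Rightarrow> ('v \<Rightarrow> real) \<Rightarrow> ereal" where
  "dual_fun src dst est g lam nu = (SUP F. ereal (lagrangian src dst est g F lam nu))"

definition cAnu :: "('e \<Rightarrow> 'v::finite) \<Rightarrow> ('e \<Rightarrow> 'v) \<Rightarrow> 'e \<Rightarrow> ('v \<Rightarrow> real) \<Rightarrow> 'e \<Rightarrow> real" where
  "cAnu src dst est nu e = cvec est e + (\<Sum>k\<in>UNIV. inc src dst e k * nu k)"

definition absAlam :: "('e \<Rightarrow> 'v::finite) \<Rightarrow> ('e \<Rightarrow> 'v) \<Rightarrow> ('v \<Rightarrow> real) \<Rightarrow> 'e \<Rightarrow> real" where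
  "absAlam src dst lam e = (\<Sum>k\<in>UNIV. \<bar>inc src dst e k\<bar> * lam k)"

text \<open>Dual objective lambda^T g^2 + 1/4 (1 ./ (|A| lambda))^T (c + A nu)^2, with the
  usual extended-value convention: a term x^2/0 is +infinity if x \<noteq> 0 and 0 if x = 0.\<close>
definition dual_obj ::
  "('e::finite \<Rightarrow> 'v::finite) \<Rightarrow> ('e \<Rightarrow> 'v) \<Rightarrow> 'e \<Rightarrow> ('v \<Rightarrow> real) \<Rightarrow>
   ('v \<Rightarrow> real) \<Rightarrow> ('v \<Rightarrow> real) \<Rightarrow> ereal" where
  "dual_obj src dst est g lam nu =
     (if \<exists>e. absAlam src dst lam e = 0 \<and> cAnu src dst est nu e \<noteq> 0 then \<infinity>
      else ereal ((\<Sum>k\<in>UNIV. lam k * (g k)\<^sup>2)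
             + 1/4 * (\<Sum>e\<in>UNIV. (cAnu src dst est nu e)\<^sup>2 / absAlam src dst lam e)))"

definition dual_optimal ::
  "('e::finite \<Rightarrow> 'v::finite) \<Rightarrow> ('e \<Rightarrow> 'v) \<Rightarrow> 'e \<Rightarrow> ('v \<Rightarrow> real) \<Rightarrow>
   ('v \<Rightarrow> real) \<Rightarrow> ('v \<Rightarrow> real) \<Rightarrow> bool" where
  "dual_optimal src dst est g lam nu \<longleftrightarrow> (\<forall>k. lam k \<ge> 0) \<and>
     (\<forall>lam' nu'. (\<forall>k. lam' k \<ge> 0) \<longrightarrow>
        dual_obj src dst est g lam nu \<le> dual_obj src dst est g lam' nu')"

end

theory Submission
  imports Defs "HOL-Analysis.Analysis"
begin

text \<open>Maximising the Lagrangian edge by edge leaves concave quadratics b F - a F^2 with maximum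
  b^2/(4a) at F = b/(2a); this gives the dual function and weak duality. For strong duality, the
  feasible flows form a compact set, so an optimal flow exists, and since the zero flow is strictly
  feasible (g > 0), separating the convex set of attainable (constraint, objective) values from the
  ray above the optimum yields multipliers \<lambda> \<ge> 0 (Slater). The optimal flow then maximises the
  Lagrangian over all circulations, so its gradient is orthogonal to the kernel of A^T and thus lies
  in the range of A, which produces \<nu>. Complementary slackness at an optimal triple gives
  c + A\<nu> = 2 (|A|\<lambda>) \<cdot> F and \<lambda> \<cdot> |A^T| F^2 = \<lambda> \<cdot> g^2, from which both identities follow.\<close>

definition divergence :: "('e::finite \<Rightarrow> 'v) \<Rightarrow> ('e \<Rightarrow> 'v) \<Rightarrow> ('e \<Rightarrow> real) \<Rightarrow> 'v \<Rightarrow> real" where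
  "divergence src dst F k = (\<Sum>e\<in>UNIV. inc src dst e k * F e)"

definition node_load :: "('e::finite \<Rightarrow> 'v) \<Rightarrow> ('e \<Rightarrow> 'v) \<Rightarrow> ('e \<Rightarrow> real) \<Rightarrow> 'v \<Rightarrow> real" where
  "node_load src dst F k = (\<Sum>e\<in>UNIV. \<bar>inc src dst e k\<bar> * (F e)\<^sup>2)"

lemma primal_feasible_iff:
  "primal_feasible src dst g F \<longleftrightarrow>
     (\<forall>k. divergence src dst F k = 0) \<and> (\<forall>k. node_load src dst F k \<le> (g k)\<^sup>2)"
  by (simp add: primal_feasible_def divergence_def node_load_def)

lemma sum_mult_sum_swap:
  "(\<Sum>k\<in>UNIV. x k * (\<Sum>e\<in>UNIV. M e k * y e)) = (\<Sum>e\<in>UNIV. y e * (\<Sum>k\<in>UNIV. M e k * x k))"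
  for x :: "'v \<Rightarrow> 'a::comm_semiring_0"
proof -
  have "(\<Sum>k\<in>UNIV. x k * (\<Sum>e\<in>UNIV. M e k * y e)) = (\<Sum>k\<in>UNIV. \<Sum>e\<in>UNIV. y e * (M e k * x k))"
    by (simp add: sum_distrib_left mult_ac)
  also have "\<dots> = (\<Sum>e\<in>UNIV. y e * (\<Sum>k\<in>UNIV. M e k * x k))"
    by (subst sum.swap) (simp add: sum_distrib_left)
  finally show ?thesis .
qed

lemma sum_mult_divergence:
  "(\<Sum>k\<in>UNIV. nu k * divergence src dst F k) = (\<Sum>e\<in>UNIV. F e * (\<Sum>k\<in>UNIV. inc src dst e k * nu k))"
  unfolding divergence_def by (rule sum_mult_sum_swap)

lemma sum_mult_node_load:
  "(\<Sum>k\<in>UNIV. lam k * node_load src dst F k) = (\<Sum>e\<in>UNIV. absAlam src dst lam e * (F e)\<^sup>2)"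
  unfolding node_load_def absAlam_def by (subst sum_mult_sum_swap) (simp add: mult_ac)

lemma lagrangian_eq:
  "lagrangian src dst est g F lam nu =
     (\<Sum>k\<in>UNIV. lam k * (g k)\<^sup>2) +
     (\<Sum>e\<in>UNIV. cAnu src dst est nu e * F e - absAlam src dst lam e * (F e)\<^sup>2)"
  using sum_mult_divergence[of nu src dst F] sum_mult_node_load[of lam src dst F]
  unfolding lagrangian_def primal_obj_def cAnu_def divergence_def node_load_def
  by (simp add: right_diff_distrib sum_subtractf sum.distrib algebra_simps)

lemma lagrangian_circulation:
  assumes "\<forall>k. divergence src dst F k = 0"
  shows "lagrangian src dst est g F lam nu =
    primal_obj est F + (\<Sum>k\<in>UNIV. lam k * ((g k)\<^sup>2 - node_load src dst F k))"
  using assms unfolding lagrangian_def divergence_def node_load_def by simp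

lemma absAlam_nonneg: "\<forall>k. lam k \<ge> 0 \<Longrightarrow> absAlam src dst lam e \<ge> 0"
  unfolding absAlam_def by (intro sum_nonneg) simp

text \<open>For a = b = 0 both sides are 0 because x / 0 = 0.\<close>

lemma vertex_gap:
  fixes a b x :: real
  assumes "a = 0 \<Longrightarrow> b = 0"
  shows "1/4 * (b\<^sup>2 / a) - (b * x - a * x\<^sup>2) = (b - 2 * a * x)\<^sup>2 / (4 * a)"
  using assms by (cases "a = 0") (auto simp: field_simps power2_eq_square)

lemma dual_obj_eq_lagrangian_plus_gap:
  assumes "\<forall>e. absAlam src dst lam e = 0 \<longrightarrow> cAnu src dst est nu e = 0"
  shows "dual_obj src dst est g lam nu = ereal (lagrangian src dst est g F lam nu +
    (\<Sum>e\<in>UNIV. (cAnu src dst est nu e - 2 * absAlam src dst lam e * F e)\<^sup>2 / (4 * absAlam src dst lam e)))"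
proof -
  have "1/4 * (\<Sum>e\<in>UNIV. (cAnu src dst est nu e)\<^sup>2 / absAlam src dst lam e) =
      (\<Sum>e\<in>UNIV. cAnu src dst est nu e * F e - absAlam src dst lam e * (F e)\<^sup>2)
      + (\<Sum>e\<in>UNIV. (cAnu src dst est nu e - 2 * absAlam src dst lam e * F e)\<^sup>2 / (4 * absAlam src dst lam e))"
    using assms by (simp add: sum_distrib_left sum.distrib[symmetric] vertex_gap[symmetric])
  then show ?thesis
    using assms unfolding dual_obj_def lagrangian_eq by auto
qed

lemma lagrangian_le_dual_obj:
  assumes lam: "\<forall>k. lam k \<ge> 0"
  shows "ereal (lagrangian src dst est g F lam nu) \<le> dual_obj src dst est g lam nu"
proof (cases "\<exists>e. absAlam src dst lam e = 0 \<and> cAnu src dst est nu e \<noteq> 0")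
  case False
  then have "(\<Sum>e\<in>UNIV. (cAnu src dst est nu e - 2 * absAlam src dst lam e * F e)\<^sup>2
      / (4 * absAlam src dst lam e)) \<ge> 0"
    using absAlam_nonneg[OF lam] by (intro sum_nonneg divide_nonneg_nonneg) auto
  then show ?thesis
    using False by (subst dual_obj_eq_lagrangian_plus_gap[where F = F]) auto
qed (simp add: dual_obj_def)

lemma lagrangian_eq_dual_obj_iff:
  assumes lam: "\<forall>k. lam k \<ge> 0"
  shows "ereal (lagrangian src dst est g F lam nu) = dual_obj src dst est g lam nu \<longleftrightarrow>
    (\<forall>e. cAnu src dst est nu e = 2 * absAlam src dst lam e * F e)"
    (is "_ \<longleftrightarrow> (\<forall>e. ?b e = 2 * ?a e * F e)")
proof
  assume eq: "ereal (lagrangian src dst est g F lam nu) = dual_obj src dst est g lam nu"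
  then have finite: "\<forall>e. ?a e = 0 \<longrightarrow> ?b e = 0"
    unfolding dual_obj_def by (auto split: if_splits)
  have "(\<Sum>e\<in>UNIV. (?b e - 2 * ?a e * F e)\<^sup>2 / (4 * ?a e)) = 0"
    using eq by (simp add: dual_obj_eq_lagrangian_plus_gap[OF finite, where F = F])
  moreover have "\<forall>e. (?b e - 2 * ?a e * F e)\<^sup>2 / (4 * ?a e) \<ge> 0"
    using absAlam_nonneg[OF lam] by (auto intro!: divide_nonneg_nonneg)
  ultimately have "\<forall>e. (?b e - 2 * ?a e * F e)\<^sup>2 / (4 * ?a e) = 0"
    by (simp add: sum_nonneg_eq_0_iff)
  then show "\<forall>e. ?b e = 2 * ?a e * F e"
    using finite by (metis divide_eq_0_iff mult_eq_0_iff power_not_zero right_minus_eq zero_neq_numeral)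
next
  assume "\<forall>e. ?b e = 2 * ?a e * F e"
  then show "ereal (lagrangian src dst est g F lam nu) = dual_obj src dst est g lam nu"
    by (subst dual_obj_eq_lagrangian_plus_gap[where F = F]) simp_all
qed

lemma dual_fun_eq_infinity:
  assumes e0: "absAlam src dst lam e0 = 0" "cAnu src dst est nu e0 \<noteq> 0"
  shows "dual_fun src dst est g lam nu = \<infinity>"
proof (rule ereal_top)
  let ?b = "cAnu src dst est nu" and ?C = "\<Sum>k\<in>UNIV. lam k * (g k)\<^sup>2"
  \<comment> \<open>Along the flows concentrated on e0 the Lagrangian is affine with nonzero slope.\<close>
  have affine: "lagrangian src dst est g (\<lambda>e. if e = e0 then x else 0) lam nu = ?C + ?b e0 * x" for x
  proof -
    have concentrated:
      "(\<lambda>e. ?b e * (if e = e0 then x else 0) - absAlam src dst lam e * (if e = e0 then x else 0)\<^sup>2)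
        = (\<lambda>e. if e = e0 then ?b e0 * x else 0)"
      using e0 by auto
    show ?thesis unfolding lagrangian_eq concentrated by simp
  qed
  fix B
  have "ereal B = ereal (lagrangian src dst est g (\<lambda>e. if e = e0 then (B - ?C) / ?b e0 else 0) lam nu)"
    unfolding affine using e0 by simp
  also have "\<dots> \<le> dual_fun src dst est g lam nu"
    unfolding dual_fun_def by (rule SUP_upper) simp
  finally show "ereal B \<le> dual_fun src dst est g lam nu" .
qed

lemma dual_fun_eq_dual_obj:
  assumes lam: "\<forall>k. lam k \<ge> 0"
  shows "dual_fun src dst est g lam nu = dual_obj src dst est g lam nu"
proof (rule antisym)
  show "dual_fun src dst est g lam nu \<le> dual_obj src dst est g lam nu"
    unfolding dual_fun_def by (rule SUP_least) (rule lagrangian_le_dual_obj[OF lam])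
next
  let ?a = "absAlam src dst lam" and ?b = "cAnu src dst est nu"
  show "dual_obj src dst est g lam nu \<le> dual_fun src dst est g lam nu"
  proof (cases "\<exists>e. ?a e = 0 \<and> ?b e \<noteq> 0")
    case True
    then show ?thesis
      using dual_fun_eq_infinity by fastforce
  next
    case False
    define F0 where "F0 e = ?b e / (2 * ?a e)" for e
    have "\<forall>e. ?b e = 2 * ?a e * F0 e"
      using False unfolding F0_def by auto
    then have "dual_obj src dst est g lam nu = ereal (lagrangian src dst est g F0 lam nu)"
      using lagrangian_eq_dual_obj_iff[OF lam] by metis
    also have "\<dots> \<le> dual_fun src dst est g lam nu"
      unfolding dual_fun_def by (rule SUP_upper) simp
    finally show ?thesis .
  qed
qed

lemma primal_obj_le_lagrangian:
  assumes F: "primal_feasible src dst g F" and lam: "\<forall>k. lam k \<ge> 0"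
  shows "primal_obj est F \<le> lagrangian src dst est g F lam nu"
  using F lam unfolding primal_feasible_iff
  by (simp add: lagrangian_circulation sum_nonneg)

lemma lagrangian_eq_primal_obj_iff:
  assumes F: "primal_feasible src dst g F" and lam: "\<forall>k. lam k \<ge> 0"
  shows "lagrangian src dst est g F lam nu = primal_obj est F \<longleftrightarrow>
    (\<forall>k. lam k * node_load src dst F k = lam k * (g k)\<^sup>2)"
proof -
  have "\<forall>k. lam k * ((g k)\<^sup>2 - node_load src dst F k) \<ge> 0"
    using F lam unfolding primal_feasible_iff by simp
  then have "(\<Sum>k\<in>UNIV. lam k * ((g k)\<^sup>2 - node_load src dst F k)) = 0 \<longleftrightarrow>
      (\<forall>k. lam k * ((g k)\<^sup>2 - node_load src dst F k) = 0)"
    by (simp add: sum_nonneg_eq_0_iff)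
  then show ?thesis
    using F unfolding primal_feasible_iff by (auto simp: lagrangian_circulation right_diff_distrib)
qed

lemma weak_duality:
  assumes "primal_feasible src dst g F" and "\<forall>k. lam k \<ge> 0"
  shows "ereal (primal_obj est F) \<le> dual_obj src dst est g lam nu"
  using primal_obj_le_lagrangian[OF assms] lagrangian_le_dual_obj[OF assms(2)]
  by (meson ereal_less_eq(3) order_trans)

lemma complementary_slackness:
  assumes F: "primal_feasible src dst g F" and lam: "\<forall>k. lam k \<ge> 0"
    and tight: "dual_obj src dst est g lam nu \<le> ereal (primal_obj est F)"
  shows "\<forall>e. cAnu src dst est nu e = 2 * absAlam src dst lam e * F e"
    and "\<forall>k. lam k * node_load src dst F k = lam k * (g k)\<^sup>2"
proof -
  have le1: "primal_obj est F \<le> lagrangian src dst est g F lam nu"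
    by (rule primal_obj_le_lagrangian[OF F lam])
  have le2: "ereal (lagrangian src dst est g F lam nu) \<le> dual_obj src dst est g lam nu"
    by (rule lagrangian_le_dual_obj[OF lam])
  have primal_eq: "lagrangian src dst est g F lam nu = primal_obj est F"
    using le1 le2 tight by (metis antisym ereal_less_eq(3) order_trans)
  then have "ereal (lagrangian src dst est g F lam nu) = dual_obj src dst est g lam nu"
    using le2 tight by simp
  then show "\<forall>e. cAnu src dst est nu e = 2 * absAlam src dst lam e * F e"
    using lagrangian_eq_dual_obj_iff[OF lam] by blast
  show "\<forall>k. lam k * node_load src dst F k = lam k * (g k)\<^sup>2"
    using primal_eq lagrangian_eq_primal_obj_iff[OF F lam] by blast
qed

lemma primal_feasible_abs_le:
  assumes "primal_feasible src dst g F" and "g (src e) \<ge> 0"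
  shows "\<bar>F e\<bar> \<le> g (src e)"
proof -
  have "\<bar>inc src dst e (src e)\<bar> * (F e)\<^sup>2 \<le> node_load src dst F (src e)"
    unfolding node_load_def by (rule member_le_sum) auto
  also have "\<dots> \<le> (g (src e))\<^sup>2"
    using assms(1) unfolding primal_feasible_iff by blast
  finally have "(F e)\<^sup>2 \<le> (g (src e))\<^sup>2"
    by (simp add: inc_def)
  then show ?thesis
    using assms(2) abs_le_square_iff[of "F e" "g (src e)"] by simp
qed

lemma exists_primal_optimal:
  fixes src dst :: "'e::finite \<Rightarrow> 'v::finite" and g :: "'v \<Rightarrow> real"
  assumes g: "\<forall>k. g k > 0"
  shows "\<exists>F. primal_optimal src dst est g F"
proof -
  define K where "K = {x::real^'e. primal_feasible src dst g (vec_nth x)}"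
  have "K = (\<Inter>k. {x. (\<Sum>e\<in>UNIV. inc src dst e k * x$e) = 0} \<inter>
               {x. (\<Sum>e\<in>UNIV. \<bar>inc src dst e k\<bar> * (x$e)\<^sup>2) \<le> (g k)\<^sup>2})"
    unfolding K_def primal_feasible_def by auto
  then have "closed K"
    by (simp only:) (intro closed_INT ballI closed_Int closed_Collect_eq closed_Collect_le continuous_intros)
  moreover have "bounded K"
    unfolding bounded_iff
  proof (intro exI ballI)
    fix x assume "x \<in> K"
    then have "\<bar>x$e\<bar> \<le> g (src e)" for e
      using primal_feasible_abs_le[of src dst g "vec_nth x"] g unfolding K_def by (simp add: less_imp_le)
    then have "(\<Sum>e\<in>UNIV. \<bar>x$e\<bar>) \<le> (\<Sum>e\<in>UNIV. g (src e))"
      by (intro sum_mono)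
    then show "norm x \<le> (\<Sum>e\<in>UNIV. g (src e))"
      using norm_le_l1_cart[of x] by linarith
  qed
  ultimately have "compact K" by (simp add: compact_eq_bounded_closed)
  moreover have "0 \<in> K"
    unfolding K_def primal_feasible_def using g by (auto simp: less_imp_le)
  moreover have "continuous_on K (\<lambda>x. primal_obj est (vec_nth x))"
    unfolding primal_obj_def by (intro continuous_intros)
  ultimately obtain x where "x \<in> K" "\<forall>y\<in>K. primal_obj est (vec_nth y) \<le> primal_obj est (vec_nth x)"
    using continuous_attains_sup[of K] by blast
  then have "primal_optimal src dst est g (vec_nth x)"
    unfolding primal_optimal_def K_def by (metis mem_Collect_eq vec_lambda_eta vec_lambda_inverse UNIV_I)
  then show ?thesis by blast
qed

text \<open>The set of (constraint, objective) values attainable up to relaxation, as in the standard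
  geometric proof of Slater's theorem. The hypothesis convexlike below (Ky Fan's convex-likeness)
  is what makes it convex; it needs no vector space structure on the domain.\<close>

definition perturbation_set :: "'a set \<Rightarrow> ('a \<Rightarrow> real) \<Rightarrow> ('k::finite \<Rightarrow> 'a \<Rightarrow> real) \<Rightarrow> ((real^'k) \<times> real) set" where
  "perturbation_set C f h = {(u, t). \<exists>x\<in>C. (\<forall>k. h k x \<le> u $ k) \<and> t \<le> f x}"

lemma convex_perturbation_set:
  fixes h :: "'k::finite \<Rightarrow> 'a \<Rightarrow> real"
  assumes convexlike: "\<And>x y u v. x \<in> C \<Longrightarrow> y \<in> C \<Longrightarrow> 0 \<le> u \<Longrightarrow> 0 \<le> v \<Longrightarrow> u + v = 1 \<Longrightarrow>
      \<exists>z\<in>C. u * f x + v * f y \<le> f z \<and> (\<forall>k. h k z \<le> u * h k x + v * h k y)"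
  shows "convex (perturbation_set C f h)"
proof (unfold convex_def, intro ballI allI impI)
  fix p q :: "(real^'k) \<times> real" and u v :: real
  assume "p \<in> perturbation_set C f h" "q \<in> perturbation_set C f h" and uv: "0 \<le> u" "0 \<le> v" "u + v = 1"
  then obtain x y where x: "x \<in> C" "\<forall>k. h k x \<le> fst p $ k" "snd p \<le> f x"
    and y: "y \<in> C" "\<forall>k. h k y \<le> fst q $ k" "snd q \<le> f y"
    unfolding perturbation_set_def by auto
  obtain z where z: "z \<in> C" "u * f x + v * f y \<le> f z" "\<forall>k. h k z \<le> u * h k x + v * h k y"
    using convexlike[OF x(1) y(1) uv] by blast
  have "h k z \<le> u * fst p $ k + v * fst q $ k" for k
    using z(3) x(2) y(2) uv by (meson add_mono mult_left_mono order_trans)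
  moreover have "u * snd p + v * snd q \<le> f z"
    using z(2) x(3) y(3) uv by (meson add_mono mult_left_mono order_trans)
  ultimately show "u *\<^sub>R p + v *\<^sub>R q \<in> perturbation_set C f h"
    using z(1) unfolding perturbation_set_def by (auto simp: case_prod_beta)
qed

lemma nonpos_if_multiples_bounded:
  fixes c d :: real
  assumes "\<And>M. 0 \<le> M \<Longrightarrow> c * M \<le> d"
  shows "c \<le> 0"
proof (rule ccontr)
  assume "\<not> c \<le> 0"
  moreover have "c * ((\<bar>d\<bar> + 1) / c) \<le> d"
    using \<open>\<not> c \<le> 0\<close> by (intro assms) simp
  ultimately show False by simp
qed

lemma perturbation_set_separating_hyperplane:
  fixes f :: "'a \<Rightarrow> real" and h :: "'k::finite \<Rightarrow> 'a \<Rightarrow> real"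
  assumes convexlike: "\<And>x y u v. x \<in> C \<Longrightarrow> y \<in> C \<Longrightarrow> 0 \<le> u \<Longrightarrow> 0 \<le> v \<Longrightarrow> u + v = 1 \<Longrightarrow>
      \<exists>z\<in>C. u * f x + v * f y \<le> f z \<and> (\<forall>k. h k z \<le> u * h k x + v * h k y)"
    and xs: "xs \<in> C" "\<And>k. h k xs \<le> 0"
    and max: "\<And>x. x \<in> C \<Longrightarrow> \<forall>k. h k x \<le> 0 \<Longrightarrow> f x \<le> f xs"
  shows "\<exists>(mu :: real^'k) nu0 b. (mu, nu0) \<noteq> 0 \<and> (\<forall>k. mu $ k \<le> 0) \<and> nu0 \<ge> 0 \<and>
    (\<forall>u t. (u, t) \<in> perturbation_set C f h \<longrightarrow> mu \<bullet> u + nu0 * t \<le> b) \<and>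
    (\<forall>t > f xs. b \<le> nu0 * t)"
proof -
  let ?S = "perturbation_set C f h" and ?T = "{0 :: real^'k} \<times> {f xs<..}"
  have memS: "(u, t) \<in> ?S" if "x \<in> C" "\<And>k. h k x \<le> u $ k" "t \<le> f x" for x u t
    using that unfolding perturbation_set_def by auto
  have xsS: "(0, f xs) \<in> ?S"
    by (rule memS[OF xs(1)]) (simp_all add: xs(2))
  have "?S \<inter> ?T = {}"
    using max unfolding perturbation_set_def by force
  moreover have "convex ?T"
    by (intro convex_Times convex_singleton convex_real_interval)
  moreover have "?T \<noteq> {}" by auto
  ultimately obtain a b where "a \<noteq> 0" and below: "\<forall>w\<in>?S. inner a w \<le> b" and above: "\<forall>w\<in>?T. b \<le> inner a w"
    using separating_hyperplane_sets[OF convex_perturbation_set[OF convexlike]] xsS by blast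
  obtain mu nu0 where a: "a = (mu, nu0)" by (cases a)
  have below': "mu \<bullet> u + nu0 * t \<le> b" if "(u, t) \<in> ?S" for u t
    using below that a by auto
  have above': "b \<le> nu0 * t" if "f xs < t" for t
    using above that a by auto
  have "mu $ k \<le> 0" for k
  proof (rule nonpos_if_multiples_bounded)
    fix M :: real assume "0 \<le> M"
    then have "h j xs \<le> axis k M $ j" for j
      using xs(2)[of j] by (cases "j = k") (simp_all add: axis_def)
    then have "mu \<bullet> axis k M + nu0 * f xs \<le> b"
      by (intro below' memS[OF xs(1)]) simp_all
    then show "mu $ k * M \<le> b - nu0 * f xs"
      by (simp add: inner_axis)
  qed
  moreover have "nu0 * f xs \<le> b" "b \<le> nu0 * (f xs + 1)"
    using below'[OF xsS] above' by simp_all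
  then have "nu0 \<ge> 0" by (simp add: distrib_left)
  ultimately show ?thesis
    using \<open>a \<noteq> 0\<close> a below' above' by blast
qed

lemma perturbation_set_supporting_hyperplane:
  fixes f :: "'a \<Rightarrow> real" and h :: "'k::finite \<Rightarrow> 'a \<Rightarrow> real"
  assumes convexlike: "\<And>x y u v. x \<in> C \<Longrightarrow> y \<in> C \<Longrightarrow> 0 \<le> u \<Longrightarrow> 0 \<le> v \<Longrightarrow> u + v = 1 \<Longrightarrow>
      \<exists>z\<in>C. u * f x + v * f y \<le> f z \<and> (\<forall>k. h k z \<le> u * h k x + v * h k y)"
    and slater: "w \<in> C" "\<And>k. h k w < 0"
    and xs: "xs \<in> C" "\<And>k. h k xs \<le> 0"
    and max: "\<And>x. x \<in> C \<Longrightarrow> \<forall>k. h k x \<le> 0 \<Longrightarrow> f x \<le> f xs"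
  shows "\<exists>(mu :: real^'k) nu0. nu0 > 0 \<and> (\<forall>k. mu $ k \<le> 0) \<and>
    (\<forall>u t. (u, t) \<in> perturbation_set C f h \<longrightarrow> mu \<bullet> u + nu0 * t \<le> nu0 * f xs)"
proof -
  obtain mu :: "real^'k" and nu0 b where nonzero: "(mu, nu0) \<noteq> 0" and mu: "\<forall>k. mu $ k \<le> 0"
    and "nu0 \<ge> 0" and below: "\<forall>u t. (u, t) \<in> perturbation_set C f h \<longrightarrow> mu \<bullet> u + nu0 * t \<le> b"
    and above: "\<forall>t > f xs. b \<le> nu0 * t"
    using perturbation_set_separating_hyperplane[OF convexlike xs max] by blast
  have "nu0 \<noteq> 0"
  proof
    assume "nu0 = 0"
    \<comment> \<open>Then the hyperplane is vertical, which the Slater point rules out.\<close>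
    have "(\<chi> k. h k w, f w) \<in> perturbation_set C f h"
      using slater(1) unfolding perturbation_set_def by auto
    then have "(\<Sum>k\<in>UNIV. mu $ k * h k w) \<le> 0"
      using below above[rule_format, of "f xs + 1"] \<open>nu0 = 0\<close> by (fastforce simp: inner_vec_def)
    moreover have nonneg: "\<forall>k. mu $ k * h k w \<ge> 0"
      using mu slater(2) by (simp add: mult_nonpos_nonpos less_imp_le)
    ultimately have "(\<Sum>k\<in>UNIV. mu $ k * h k w) = 0"
      by (intro antisym sum_nonneg) auto
    then have "\<forall>k. mu $ k = 0"
      using nonneg slater(2) by (simp add: sum_nonneg_eq_0_iff less_imp_neq)
    then show False
      using nonzero \<open>nu0 = 0\<close> by (simp add: vec_eq_iff zero_prod_def)
  qed
  with \<open>nu0 \<ge> 0\<close> have nu0: "nu0 > 0" by simp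
  have "b \<le> nu0 * f xs"
  proof (rule dense_ge)
    fix y assume "nu0 * f xs < y"
    then have "f xs < y / nu0" using nu0 by (simp add: field_simps)
    then show "b \<le> y" using above nu0 by fastforce
  qed
  then show ?thesis
    using nu0 mu below by force
qed

lemma lagrange_multiplier_slater:
  fixes f :: "'a \<Rightarrow> real" and h :: "'k::finite \<Rightarrow> 'a \<Rightarrow> real"
  assumes convexlike: "\<And>x y u v. x \<in> C \<Longrightarrow> y \<in> C \<Longrightarrow> 0 \<le> u \<Longrightarrow> 0 \<le> v \<Longrightarrow> u + v = 1 \<Longrightarrow>
      \<exists>z\<in>C. u * f x + v * f y \<le> f z \<and> (\<forall>k. h k z \<le> u * h k x + v * h k y)"
    and slater: "w \<in> C" "\<And>k. h k w < 0"
    and xs: "xs \<in> C" "\<And>k. h k xs \<le> 0"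
    and max: "\<And>x. x \<in> C \<Longrightarrow> \<forall>k. h k x \<le> 0 \<Longrightarrow> f x \<le> f xs"
  shows "\<exists>lam. (\<forall>k. 0 \<le> lam k) \<and> (\<forall>x\<in>C. f x - (\<Sum>k\<in>UNIV. lam k * h k x) \<le> f xs)"
proof -
  obtain nu0 and mu :: "real^'k" where nu0: "nu0 > 0" and mu: "\<And>k. mu $ k \<le> 0"
    and supp: "\<And>u t. (u, t) \<in> perturbation_set C f h \<Longrightarrow> mu \<bullet> u + nu0 * t \<le> nu0 * f xs"
    using perturbation_set_supporting_hyperplane[OF convexlike slater xs max] by blast
  define lam where "lam k = - mu $ k / nu0" for k
  have "f x - (\<Sum>k\<in>UNIV. lam k * h k x) \<le> f xs" if "x \<in> C" for x
  proof -
    have "mu \<bullet> (\<chi> k. h k x) + nu0 * f x \<le> nu0 * f xs"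
      using that by (intro supp) (auto simp: perturbation_set_def)
    moreover have "mu \<bullet> (\<chi> k. h k x) = - nu0 * (\<Sum>k\<in>UNIV. lam k * h k x)"
      using nu0 unfolding lam_def inner_vec_def by (simp add: sum_distrib_left sum_negf[symmetric])
    ultimately have "nu0 * (f x - (\<Sum>k\<in>UNIV. lam k * h k x)) \<le> nu0 * f xs"
      by (simp add: right_diff_distrib)
    then show ?thesis using nu0 by simp
  qed
  moreover have "\<forall>k. 0 \<le> lam k"
    using mu nu0 by (simp add: lam_def divide_nonpos_pos)
  ultimately show ?thesis by blast
qed

lemma linear_term_zero_if_quadratic_nonpos:
  fixes X Y :: real
  assumes "\<And>t. t * X - t\<^sup>2 * Y \<le> 0"
  shows "X = 0"
proof -
  define t where "t = X / (\<bar>Y\<bar> + 1)"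
  have "X = t * (\<bar>Y\<bar> + 1)"
    unfolding t_def by (simp add: add_pos_nonneg)
  then have "t * X - t\<^sup>2 * Y = t\<^sup>2 * (\<bar>Y\<bar> - Y + 1)"
    by (simp add: power2_eq_square algebra_simps)
  moreover have "t\<^sup>2 \<le> t\<^sup>2 * (\<bar>Y\<bar> - Y + 1)"
    using mult_left_mono[of 1 "\<bar>Y\<bar> - Y + 1" "t\<^sup>2"] by simp
  ultimately have "t\<^sup>2 \<le> 0"
    using assms[of t] by linarith
  then show ?thesis
    using \<open>X = t * (\<bar>Y\<bar> + 1)\<close> by simp
qed

lemma orthogonal_kernel_transpose_imp_in_range:
  fixes M :: "real^'n^'m"
  assumes "\<And>x. transpose M *v x = 0 \<Longrightarrow> y \<bullet> x = 0"
  shows "y \<in> range ((*v) M)"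
proof -
  have "y \<in> ((*v) (transpose M) -` {0})\<^sup>\<bottom>"
    using assms by (auto simp: orthogonal_comp_def orthogonal_def inner_commute)
  also have "(*v) (transpose M) -` {0} = (range ((*v) M))\<^sup>\<bottom>"
    using ker_orthogonal_comp_adjoint[of "(*v) (transpose M)"] adjoint_matrix[of "transpose M"]
    by (simp add: matrix_vector_mul_linear)
  also have "(range ((*v) M))\<^sup>\<bottom>\<^sup>\<bottom> = range ((*v) M)"
    by (intro orthogonal_comp_self linear_subspace_image matrix_vector_mul_linear subspace_UNIV)
  finally show ?thesis .
qed

lemma circulation_orthogonal_imp_potential:
  fixes src dst :: "'e::finite \<Rightarrow> 'v::finite" and G :: "'e \<Rightarrow> real"
  assumes "\<And>d. \<forall>k. divergence src dst d k = 0 \<Longrightarrow> (\<Sum>e\<in>UNIV. G e * d e) = 0"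
  shows "\<exists>mu. \<forall>e. G e = (\<Sum>k\<in>UNIV. inc src dst e k * mu k)"
proof -
  define M :: "real^'v^'e" where "M = (\<chi> e k. inc src dst e k)"
  have "(\<chi> e. G e) \<in> range ((*v) M)"
  proof (rule orthogonal_kernel_transpose_imp_in_range)
    fix x :: "real^'e"
    assume "transpose M *v x = 0"
    then have "\<forall>k. divergence src dst (vec_nth x) k = 0"
      by (simp add: M_def divergence_def vec_eq_iff matrix_vector_mult_def transpose_def mult.commute)
    then show "(\<chi> e. G e) \<bullet> x = 0"
      using assms by (simp add: inner_vec_def)
  qed
  then obtain m where "(\<chi> e. G e) = M *v m" by blast
  then have "\<forall>e. G e = (\<Sum>k\<in>UNIV. inc src dst e k * m $ k)"
    by (simp add: M_def vec_eq_iff matrix_vector_mult_def)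
  then show ?thesis by blast
qed

lemma stationary_flow_has_potential:
  assumes Fs: "primal_feasible src dst g Fs" and lam: "\<forall>k. lam k \<ge> 0"
    and max: "\<And>F. \<forall>k. divergence src dst F k = 0 \<Longrightarrow>
      lagrangian src dst est g F lam (\<lambda>_. 0) \<le> primal_obj est Fs"
  shows "\<exists>nu. \<forall>e. cAnu src dst est nu e = 2 * absAlam src dst lam e * Fs e"
proof -
  let ?a = "absAlam src dst lam" and ?L = "\<lambda>F. lagrangian src dst est g F lam (\<lambda>_. 0)"
  have "(\<Sum>e\<in>UNIV. (cvec est e - 2 * ?a e * Fs e) * d e) = 0"
    if d: "\<forall>k. divergence src dst d k = 0" for d
  proof (rule linear_term_zero_if_quadratic_nonpos)
    fix t
    let ?Ft = "\<lambda>e. Fs e + t * d e"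
    have "\<forall>k. divergence src dst ?Ft k = 0"
      using Fs d unfolding primal_feasible_iff divergence_def
      by (simp add: distrib_left sum.distrib mult.left_commute[of _ t] sum_distrib_left[symmetric])
    then have "?L ?Ft \<le> ?L Fs"
      using max primal_obj_le_lagrangian[OF Fs lam] by (meson order_trans)
    moreover have "?L ?Ft = ?L Fs + t * (\<Sum>e\<in>UNIV. (cvec est e - 2 * ?a e * Fs e) * d e)
        - t\<^sup>2 * (\<Sum>e\<in>UNIV. ?a e * (d e)\<^sup>2)"
      unfolding lagrangian_eq cAnu_def
      by (simp add: power2_eq_square algebra_simps sum.distrib sum_subtractf sum_distrib_left)
    ultimately show "t * (\<Sum>e\<in>UNIV. (cvec est e - 2 * ?a e * Fs e) * d e)
        - t\<^sup>2 * (\<Sum>e\<in>UNIV. ?a e * (d e)\<^sup>2) \<le> 0"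
      by simp
  qed
  then have "\<exists>mu. \<forall>e. cvec est e - 2 * ?a e * Fs e = (\<Sum>k\<in>UNIV. inc src dst e k * mu k)"
    by (rule circulation_orthogonal_imp_potential) blast
  then obtain mu where "\<forall>e. cvec est e - 2 * ?a e * Fs e = (\<Sum>k\<in>UNIV. inc src dst e k * mu k)" ..
  then have "\<forall>e. cAnu src dst est (\<lambda>k. - mu k) e = 2 * ?a e * Fs e"
    by (simp add: cAnu_def sum_negf algebra_simps)
  then show ?thesis by blast
qed

lemma node_load_convex_combination:
  assumes "0 \<le> u" "0 \<le> v" "u + v = 1"
  shows "node_load src dst (\<lambda>e. u * x e + v * y e) k \<le>
    u * node_load src dst x k + v * node_load src dst y k"
proof -
  have "(u * x e + v * y e)\<^sup>2 \<le> u * (x e)\<^sup>2 + v * (y e)\<^sup>2" for e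
    using convex_onD[OF convex_power2, of v "x e" "y e"] assms by (simp add: eq_diff_eq[symmetric])
  then have "\<bar>inc src dst e k\<bar> * (u * x e + v * y e)\<^sup>2 \<le>
      \<bar>inc src dst e k\<bar> * (u * (x e)\<^sup>2 + v * (y e)\<^sup>2)" for e
    by (rule mult_left_mono) simp
  then have "\<bar>inc src dst e k\<bar> * (u * x e + v * y e)\<^sup>2 \<le>
      u * (\<bar>inc src dst e k\<bar> * (x e)\<^sup>2) + v * (\<bar>inc src dst e k\<bar> * (y e)\<^sup>2)" for e
    by (simp add: algebra_simps)
  then show ?thesis
    unfolding node_load_def sum_distrib_left sum.distrib[symmetric] by (rule sum_mono)
qed

lemma circulation_problem_convexlike:
  assumes "\<forall>k. divergence src dst x k = 0" "\<forall>k. divergence src dst y k = 0"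
    and uv: "0 \<le> u" "0 \<le> v" "u + v = 1"
  shows "\<exists>z\<in>{F. \<forall>k. divergence src dst F k = 0}.
    u * primal_obj est x + v * primal_obj est y \<le> primal_obj est z \<and>
    (\<forall>k. node_load src dst z k - (g k)\<^sup>2 \<le>
      u * (node_load src dst x k - (g k)\<^sup>2) + v * (node_load src dst y k - (g k)\<^sup>2))"
proof (intro bexI conjI allI)
  let ?z = "\<lambda>e. u * x e + v * y e"
  have "divergence src dst ?z k = u * divergence src dst x k + v * divergence src dst y k" for k
    by (simp add: divergence_def distrib_left sum.distrib sum_distrib_left mult_ac)
  then show "?z \<in> {F. \<forall>k. divergence src dst F k = 0}"
    using assms(1,2) by simp
  show "u * primal_obj est x + v * primal_obj est y \<le> primal_obj est ?z"
    by (simp add: primal_obj_def distrib_left sum.distrib sum_distrib_left mult_ac)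
  fix k
  have "u * (g k)\<^sup>2 + v * (g k)\<^sup>2 = (g k)\<^sup>2"
    using uv(3) by (simp add: distrib_right[symmetric])
  then show "node_load src dst ?z k - (g k)\<^sup>2 \<le>
      u * (node_load src dst x k - (g k)\<^sup>2) + v * (node_load src dst y k - (g k)\<^sup>2)"
    using node_load_convex_combination[OF uv, of src dst x y k]
    unfolding right_diff_distrib by linarith
qed

lemma optimal_flow_maximises_lagrangian:
  fixes src dst :: "'e::finite \<Rightarrow> 'v::finite" and g :: "'v \<Rightarrow> real"
  assumes g: "\<forall>k. g k > 0" and opt: "primal_optimal src dst est g Fs"
  shows "\<exists>lam. (\<forall>k. 0 \<le> lam k) \<and> (\<forall>F. (\<forall>k. divergence src dst F k = 0) \<longrightarrow>
    lagrangian src dst est g F lam (\<lambda>_. 0) \<le> primal_obj est Fs)"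
proof -
  let ?C = "{F. \<forall>k. divergence src dst F k = 0}" and ?h = "\<lambda>k F. node_load src dst F k - (g k)\<^sup>2"
  have Fs: "primal_feasible src dst g Fs"
    using opt unfolding primal_optimal_def by simp
  \<comment> \<open>The zero flow is a Slater point because g > 0.\<close>
  have "\<exists>lam. (\<forall>k. 0 \<le> lam k) \<and>
      (\<forall>F\<in>?C. primal_obj est F - (\<Sum>k\<in>UNIV. lam k * ?h k F) \<le> primal_obj est Fs)"
  proof (rule lagrange_multiplier_slater[where w = "\<lambda>_. 0"])
    show "\<exists>z\<in>?C. u * primal_obj est x + v * primal_obj est y \<le> primal_obj est z \<and>
        (\<forall>k. ?h k z \<le> u * ?h k x + v * ?h k y)"
      if "x \<in> ?C" "y \<in> ?C" "0 \<le> u" "0 \<le> v" "u + v = 1" for x y and u v :: real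
      using circulation_problem_convexlike that by simp
    show "?h k (\<lambda>_. 0) < 0" for k
      using g[rule_format, of k] by (simp add: node_load_def)
    show "primal_obj est F \<le> primal_obj est Fs" if "F \<in> ?C" "\<forall>k. ?h k F \<le> 0" for F
      using that opt by (simp add: primal_optimal_def primal_feasible_iff)
  qed (use Fs in \<open>simp_all add: divergence_def primal_feasible_iff\<close>)
  then show ?thesis
    by (simp add: lagrangian_circulation right_diff_distrib sum_subtractf diff_diff_eq2 add_diff_eq)
qed

lemma strong_duality:
  fixes src dst :: "'e::finite \<Rightarrow> 'v::finite" and g :: "'v \<Rightarrow> real"
  assumes g: "\<forall>k. g k > 0"
  shows "\<exists>F lam nu. primal_optimal src dst est g F \<and> dual_optimal src dst est g lam nu \<and>
    ereal (primal_obj est F) = dual_obj src dst est g lam nu"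
proof -
  obtain Fs where opt: "primal_optimal src dst est g Fs"
    using exists_primal_optimal[OF g] by blast
  then have Fs: "primal_feasible src dst g Fs"
    unfolding primal_optimal_def by simp
  obtain lam where lam: "\<forall>k. 0 \<le> lam k" and max: "\<And>F. \<forall>k. divergence src dst F k = 0 \<Longrightarrow>
      lagrangian src dst est g F lam (\<lambda>_. 0) \<le> primal_obj est Fs"
    using optimal_flow_maximises_lagrangian[OF g opt] by blast
  obtain nu where nu: "\<forall>e. cAnu src dst est nu e = 2 * absAlam src dst lam e * Fs e"
    using stationary_flow_has_potential[OF Fs lam max] by blast
  have "lagrangian src dst est g Fs lam (\<lambda>_. 0) = primal_obj est Fs"
    using max primal_obj_le_lagrangian[OF Fs lam] Fs unfolding primal_feasible_iff
    by (meson antisym)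
  \<comment> \<open>Complementary slackness does not involve \<nu>, so it transfers from \<nu> = 0 to the potential.\<close>
  then have "lagrangian src dst est g Fs lam nu = primal_obj est Fs"
    using lagrangian_eq_primal_obj_iff[OF Fs lam] by blast
  moreover have "ereal (lagrangian src dst est g Fs lam nu) = dual_obj src dst est g lam nu"
    using lagrangian_eq_dual_obj_iff[OF lam] nu by blast
  ultimately have eq: "ereal (primal_obj est Fs) = dual_obj src dst est g lam nu"
    by simp
  have "dual_optimal src dst est g lam nu"
    unfolding dual_optimal_def using lam eq weak_duality[OF Fs] by metis
  then show ?thesis
    using opt eq by blast
qed

lemma optimal_pair_complementary_slackness:
  fixes src dst :: "'e::finite \<Rightarrow> 'v::finite" and g :: "'v \<Rightarrow> real"
  assumes g: "\<forall>k. g k > 0"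
    and F: "primal_optimal src dst est g F" and dual: "dual_optimal src dst est g lam nu"
  shows "\<forall>e. cAnu src dst est nu e = 2 * absAlam src dst lam e * F e"
    and "\<forall>k. lam k * node_load src dst F k = lam k * (g k)\<^sup>2"
proof -
  obtain F0 lam0 nu0 where F0: "primal_optimal src dst est g F0"
    and dual0: "dual_optimal src dst est g lam0 nu0"
    and eq: "ereal (primal_obj est F0) = dual_obj src dst est g lam0 nu0"
    using strong_duality[OF g] by blast
  have feasible: "primal_feasible src dst g F" and lam: "\<forall>k. lam k \<ge> 0"
    using F dual unfolding primal_optimal_def dual_optimal_def by simp_all
  have "dual_obj src dst est g lam nu \<le> dual_obj src dst est g lam0 nu0"
    using dual dual0 unfolding dual_optimal_def by blast
  also have "\<dots> = ereal (primal_obj est F)"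
    using F F0 eq unfolding primal_optimal_def by (metis antisym)
  finally have "dual_obj src dst est g lam nu \<le> ereal (primal_obj est F)" .
  then show "\<forall>e. cAnu src dst est nu e = 2 * absAlam src dst lam e * F e"
    and "\<forall>k. lam k * node_load src dst F k = lam k * (g k)\<^sup>2"
    using complementary_slackness[OF feasible lam] by blast+
qed

lemma primal_obj_eq_twice_weighted_capacity:
  assumes div: "\<forall>k. divergence src dst F k = 0"
    and grad: "\<forall>e. cAnu src dst est nu e = 2 * absAlam src dst lam e * F e"
    and slack: "\<forall>k. lam k * node_load src dst F k = lam k * (g k)\<^sup>2"
  shows "primal_obj est F = 2 * (\<Sum>k\<in>UNIV. lam k * (g k)\<^sup>2)"
proof -
  have "(\<Sum>k\<in>UNIV. lam k * ((g k)\<^sup>2 - node_load src dst F k)) = 0"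
    by (simp add: right_diff_distrib slack)
  then have "primal_obj est F = lagrangian src dst est g F lam nu"
    by (simp add: lagrangian_circulation[OF div])
  also have "\<dots> = (\<Sum>k\<in>UNIV. lam k * (g k)\<^sup>2) + (\<Sum>e\<in>UNIV. absAlam src dst lam e * (F e)\<^sup>2)"
    unfolding lagrangian_eq using grad by (simp add: power2_eq_square mult_ac)
  also have "(\<Sum>e\<in>UNIV. absAlam src dst lam e * (F e)\<^sup>2) = (\<Sum>k\<in>UNIV. lam k * (g k)\<^sup>2)"
    by (simp add: sum_mult_node_load[symmetric] slack)
  finally show ?thesis by simp
qed

lemma node_equality_from_complementary_slackness:
  assumes lam: "\<forall>k. lam k \<ge> 0"
    and grad: "\<forall>e. cAnu src dst est nu e = 2 * absAlam src dst lam e * F e"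
    and slack: "lam k * node_load src dst F k = lam k * (g k)\<^sup>2"
  shows "lam k * (\<Sum>e\<in>UNIV. \<bar>inc src dst e k\<bar> * (cAnu src dst est nu e / absAlam src dst lam e)\<^sup>2)
    = 4 * (lam k * (g k)\<^sup>2)"
proof (cases "lam k = 0")
  case False
  then have pos: "lam k > 0" using lam by (simp add: less_le)
  \<comment> \<open>Every edge at a node with positive multiplier has positive weight, so the quotient is 2 F.\<close>
  have edge: "\<bar>inc src dst e k\<bar> * (cAnu src dst est nu e / absAlam src dst lam e)\<^sup>2
      = 4 * (\<bar>inc src dst e k\<bar> * (F e)\<^sup>2)" for e
  proof (cases "inc src dst e k = 0")
    case False
    then have "\<bar>inc src dst e k\<bar> * lam k \<le> absAlam src dst lam e"
      unfolding absAlam_def using lam by (intro member_le_sum) auto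
    then have "absAlam src dst lam e > 0"
      using False pos by (simp add: inc_def split: if_splits)
    then show ?thesis
      using grad by (simp add: power2_eq_square)
  qed simp
  have "(\<Sum>e\<in>UNIV. \<bar>inc src dst e k\<bar> * (cAnu src dst est nu e / absAlam src dst lam e)\<^sup>2)
      = 4 * node_load src dst F k"
    unfolding edge node_load_def by (simp add: sum_distrib_left)
  then show ?thesis
    using slack by (simp add: mult.left_commute)
qed simp

theorem proposition1:
  fixes src dst :: "'e::finite \<Rightarrow> 'v::finite" and s t :: 'v and est :: 'e
    and g :: "'v \<Rightarrow> real"
  assumes "transport_graph src dst s t est"
    and "\<forall>k. g k > 0"
  shows
    \<comment> \<open>the Lagrangian dual function is the stated dual objective\<close>
    "(\<forall>lam nu. (\<forall>k. lam k \<ge> 0) \<longrightarrow>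
        dual_fun src dst est g lam nu = dual_obj src dst est g lam nu)
     \<comment> \<open>primal max and dual min are attained and coincide\<close>
     \<and> (\<exists>F lam nu. primal_optimal src dst est g F \<and> dual_optimal src dst est g lam nu \<and>
          ereal (primal_obj est F) = dual_obj src dst est g lam nu)
     \<comment> \<open>every optimal triple satisfies the stated identities\<close>
     \<and> (\<forall>F lam nu. primal_optimal src dst est g F \<and> dual_optimal src dst est g lam nu \<longrightarrow>
          primal_obj est F = 2 * (\<Sum>k\<in>UNIV. lam k * (g k)\<^sup>2)
          \<and> (\<forall>k. lam k * (\<Sum>e\<in>UNIV. \<bar>inc src dst e k\<bar> *
                   (cAnu src dst est nu e / absAlam src dst lam e)\<^sup>2)
                 = 4 * (lam k * (g k)\<^sup>2)))"
proof (intro conjI allI impI)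
  \<comment> \<open>The graph structure is irrelevant: only g > 0 is used, through the Slater point 0.\<close>
  show "dual_fun src dst est g lam nu = dual_obj src dst est g lam nu"
    if "\<forall>k. lam k \<ge> 0" for lam nu
    using dual_fun_eq_dual_obj[OF that] .
  show "\<exists>F lam nu. primal_optimal src dst est g F \<and> dual_optimal src dst est g lam nu \<and>
      ereal (primal_obj est F) = dual_obj src dst est g lam nu"
    using strong_duality[OF assms(2)] .
  fix F lam nu
  assume "primal_optimal src dst est g F \<and> dual_optimal src dst est g lam nu"
  then have F: "primal_optimal src dst est g F" and dual: "dual_optimal src dst est g lam nu"
    by simp_all
  have div: "\<forall>k. divergence src dst F k = 0" and lam: "\<forall>k. lam k \<ge> 0"
    using F dual unfolding primal_optimal_def primal_feasible_iff dual_optimal_def by simp_all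
  note slackness = optimal_pair_complementary_slackness[OF assms(2) F dual]
  show "primal_obj est F = 2 * (\<Sum>k\<in>UNIV. lam k * (g k)\<^sup>2)"
    using primal_obj_eq_twice_weighted_capacity[OF div slackness] .
  show "lam k * (\<Sum>e\<in>UNIV. \<bar>inc src dst e k\<bar> * (cAnu src dst est nu e / absAlam src dst lam e)\<^sup>2)
      = 4 * (lam k * (g k)\<^sup>2)" for k
    using node_equality_from_complementary_slackness[OF lam slackness(1)] slackness(2) by blast
qed

end
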